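(* Let $m,n\ge 1$ and let $\lambda=n^m$ be the rectangular shape with $m$ rows, each of length $n$. Let $\rho=\{\rho_{i,j}\}_{1\le i\le m,\,1\le j\le n}$ be any density on $\lambda$, and define the rotated density $r(\rho)$ by $r(\rho)_{i,j}=\rho_{m+1-i,\,n+1-j}$. Then $|\mathrm{SVT}(\lambda,\rho)|=|\mathrm{SVT}(\lambda,r(\rho))|$.
   Context: A Young diagram of shape $\lambda=(\lambda_1\ge\lambda_2\ge\dots\ge\lambda_m)$ is a left-justified array of cells with $\lambda_i$ cells in row $i$; cell $(i,j)$ is in row $i$ (numbered from the top) and column $j$ (numbered from the left). A density on $\lambda$ is an assignment of a nonnegative integer $\rho_{i,j}$ to every cell $(i,j)$; let $N=\sum_{i,j}\rho_{i,j}$. A standard set-valued Young tableau of shape $\lambda$ and density $\rho$ is an assignment of a set $S_{i,j}$ with $|S_{i,j}|=\rho_{i,j}$ to each cell, such that the sets $S_{i,j}$ partition $[N]=\{1,\dots,N\}$, and such that every element of $S_{i,j}$ is smaller than every element of $S_{i,j+1}$ and every element of $S_{i+1,j}$ whenever those cells exist (conditions involving an empty set are vacuous). $\mathrm{SVT}(\lambda,\rho)$ denotes the set of all such tableaux. *)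

theory Defs
  imports Main
begin

definition rect_cells :: "nat \<Rightarrow> nat \<Rightarrow> (nat \<times> nat) set" where
  "rect_cells m n = {1..m} \<times> {1..n}"

definition density_total :: "nat \<Rightarrow> nat \<Rightarrow> (nat \<Rightarrow> nat \<Rightarrow> nat) \<Rightarrow> nat" where
  "density_total m n rho = (\<Sum>(i,j)\<in>rect_cells m n. rho i j)"

text \<open>A tableau assigns a set of positive integers to each cell; to obtain a finite
  set of tableaux, cells outside the shape are assigned the empty set.\<close>
definition SVT_rect :: "nat \<Rightarrow> nat \<Rightarrow> (nat \<Rightarrow> nat \<Rightarrow> nat) \<Rightarrow> (nat \<times> nat \<Rightarrow> nat set) set" where
  "SVT_rect m n rho = {S.
     (\<forall>c. c \<notin> rect_cells m n \<longrightarrow> S c = {}) \<and>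
     (\<forall>(i,j)\<in>rect_cells m n. finite (S (i,j)) \<and> card (S (i,j)) = rho i j) \<and>
     (\<forall>c\<in>rect_cells m n. \<forall>d\<in>rect_cells m n. c \<noteq> d \<longrightarrow> S c \<inter> S d = {}) \<and>
     (\<Union>c\<in>rect_cells m n. S c) = {1..density_total m n rho} \<and>
     (\<forall>(i,j)\<in>rect_cells m n. (i,j+1) \<in> rect_cells m n \<longrightarrow>
         (\<forall>x\<in>S (i,j). \<forall>y\<in>S (i,j+1). x < y)) \<and>
     (\<forall>(i,j)\<in>rect_cells m n. (i+1,j) \<in> rect_cells m n \<longrightarrow>
         (\<forall>x\<in>S (i,j). \<forall>y\<in>S (i+1,j). x < y))}"

definition rotate_density :: "nat \<Rightarrow> nat \<Rightarrow> (nat \<Rightarrow> nat \<Rightarrow> nat) \<Rightarrow> (nat \<Rightarrow> nat \<Rightarrow> nat)" where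
  "rotate_density m n rho = (\<lambda>i j. rho (m + 1 - i) (n + 1 - j))"

end

theory Submission
  imports Defs
begin

text \<open>Rotating a tableau by 180 degrees and replacing every entry x by N + 1 - x reverses
  both the order of the cells and the order of the labels, so the row and column conditions
  are preserved, and the cell (i,j) of the result has size rho(m+1-i, n+1-j).
  The construction is an involution, hence a bijection between SVT(\<lambda>,\<rho>) and SVT(\<lambda>,r(\<rho>)).
  No use is made of m, n \<ge> 1.\<close>

definition reverse_label :: "nat \<Rightarrow> nat \<Rightarrow> nat" where
  "reverse_label N x = N + 1 - x"

definition rotate_cell :: "nat \<Rightarrow> nat \<Rightarrow> nat \<times> nat \<Rightarrow> nat \<times> nat" where
  "rotate_cell m n = (\<lambda>(i, j). (m + 1 - i, n + 1 - j))"

definition rotate_tableau ::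
    "nat \<Rightarrow> nat \<Rightarrow> nat \<Rightarrow> (nat \<times> nat \<Rightarrow> nat set) \<Rightarrow> (nat \<times> nat \<Rightarrow> nat set)" where
  "rotate_tableau m n N S =
     (\<lambda>c. if c \<in> rect_cells m n then reverse_label N ` S (rotate_cell m n c) else {})"

lemma reverse_label_reverse_label:
  "x \<in> {1..N} \<Longrightarrow> reverse_label N (reverse_label N x) = x"
  by (simp add: reverse_label_def)

lemma bij_betw_reverse_label: "bij_betw (reverse_label N) {1..N} {1..N}"
  by (rule bij_betw_byWitness[where f' = "reverse_label N"])
     (auto simp: reverse_label_def)

lemma reverse_label_image_less:
  assumes "\<forall>x\<in>A. \<forall>y\<in>B. x < y" and "B \<subseteq> {1..N}"
  shows "\<forall>x\<in>reverse_label N ` B. \<forall>y\<in>reverse_label N ` A. x < y"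
  using assms by (fastforce simp: reverse_label_def)

lemma rotate_cell_in_rect_cells: "c \<in> rect_cells m n \<Longrightarrow> rotate_cell m n c \<in> rect_cells m n"
  by (auto simp: rotate_cell_def rect_cells_def)

lemma rotate_cell_rotate_cell: "c \<in> rect_cells m n \<Longrightarrow> rotate_cell m n (rotate_cell m n c) = c"
  by (auto simp: rotate_cell_def rect_cells_def)

lemma bij_betw_rotate_cell: "bij_betw (rotate_cell m n) (rect_cells m n) (rect_cells m n)"
  by (rule bij_betw_byWitness[where f' = "rotate_cell m n"])
     (auto simp: rotate_cell_in_rect_cells rotate_cell_rotate_cell)

lemma rotate_cell_row_neighbours:
  assumes "(i, j) \<in> rect_cells m n" "(i, j + 1) \<in> rect_cells m n"
  shows "rotate_cell m n (i, j + 1) = (m + 1 - i, n - j)"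
    and "rotate_cell m n (i, j) = (m + 1 - i, n - j + 1)"
    and "(m + 1 - i, n - j) \<in> rect_cells m n" "(m + 1 - i, n - j + 1) \<in> rect_cells m n"
  using assms by (auto simp: rotate_cell_def rect_cells_def)

lemma rotate_cell_column_neighbours:
  assumes "(i, j) \<in> rect_cells m n" "(i + 1, j) \<in> rect_cells m n"
  shows "rotate_cell m n (i + 1, j) = (m - i, n + 1 - j)"
    and "rotate_cell m n (i, j) = (m - i + 1, n + 1 - j)"
    and "(m - i, n + 1 - j) \<in> rect_cells m n" "(m - i + 1, n + 1 - j) \<in> rect_cells m n"
  using assms by (auto simp: rotate_cell_def rect_cells_def)

lemma density_total_rotate_density:
  "density_total m n (rotate_density m n rho) = density_total m n rho"
proof -
  have "density_total m n (rotate_density m n rho)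
      = (\<Sum>c\<in>rect_cells m n. case_prod rho (rotate_cell m n c))"
    unfolding density_total_def rotate_density_def rotate_cell_def
    by (rule sum.cong) auto
  also have "\<dots> = density_total m n rho"
    unfolding density_total_def
    using sum.reindex_bij_betw[OF bij_betw_rotate_cell, of "case_prod rho"] by simp
  finally show ?thesis .
qed

lemma SVT_rect_cong:
  assumes "\<And>i j. (i, j) \<in> rect_cells m n \<Longrightarrow> rho i j = rho' i j"
  shows "SVT_rect m n rho = SVT_rect m n rho'"
proof -
  have "density_total m n rho = density_total m n rho'"
    unfolding density_total_def by (rule sum.cong) (auto simp: assms)
  then show ?thesis
    unfolding SVT_rect_def using assms by (auto 0 0) fastforce+
qed

lemma SVT_rect_rotate_density_rotate_density:
  "SVT_rect m n (rotate_density m n (rotate_density m n rho)) = SVT_rect m n rho"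
  by (rule SVT_rect_cong) (auto simp: rotate_density_def rect_cells_def)

lemma SVT_rect_subset:
  "S \<in> SVT_rect m n rho \<Longrightarrow> c \<in> rect_cells m n \<Longrightarrow> S c \<subseteq> {1..density_total m n rho}"
  unfolding SVT_rect_def by blast

lemma rotate_tableau_in_SVT_rect:
  assumes S: "S \<in> SVT_rect m n rho"
  shows "rotate_tableau m n (density_total m n rho) S \<in> SVT_rect m n (rotate_density m n rho)"
proof -
  define N where "N = density_total m n rho"
  define R where "R = rect_cells m n"
  let ?f = "reverse_label N" and ?r = "rotate_cell m n"
  let ?T = "rotate_tableau m n N S"
  have T: "\<And>c. c \<in> R \<Longrightarrow> ?T c = ?f ` S (?r c)"
    by (simp add: rotate_tableau_def R_def)
  have r: "\<And>c. c \<in> R \<Longrightarrow> ?r c \<in> R"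
    by (simp add: rotate_cell_in_rect_cells R_def)
  have sub: "\<And>c. c \<in> R \<Longrightarrow> S c \<subseteq> {1..N}"
    using SVT_rect_subset[OF S] by (simp add: N_def R_def)
  have inj: "inj_on ?f {1..N}"
    using bij_betw_reverse_label bij_betw_imp_inj_on by blast
  have card: "\<forall>(i,j)\<in>R. finite (S (i,j)) \<and> card (S (i,j)) = rho i j"
   and disjoint: "\<forall>c\<in>R. \<forall>d\<in>R. c \<noteq> d \<longrightarrow> S c \<inter> S d = {}"
   and union: "(\<Union>c\<in>R. S c) = {1..N}"
   and rows: "\<forall>(i,j)\<in>R. (i,j+1) \<in> R \<longrightarrow> (\<forall>x\<in>S (i,j). \<forall>y\<in>S (i,j+1). x < y)"
   and columns: "\<forall>(i,j)\<in>R. (i+1,j) \<in> R \<longrightarrow> (\<forall>x\<in>S (i,j). \<forall>y\<in>S (i+1,j). x < y)"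
    using S unfolding SVT_rect_def N_def R_def by auto
  have "finite (?T c) \<and> card (?T c) = case_prod (rotate_density m n rho) c" if "c \<in> R" for c
  proof -
    obtain i' j' where c': "?r c = (i', j')" by fastforce
    then have "finite (S (i', j')) \<and> card (S (i', j')) = case_prod (rotate_density m n rho) c"
      using card r[OF that] by (auto simp: rotate_cell_def rotate_density_def split: prod.splits)
    then show ?thesis
      using T[OF that] c' card_image[OF inj_on_subset[OF inj sub[OF r[OF that]]]] by simp
  qed
  moreover have "?T c \<inter> ?T d = {}" if "c \<in> R" "d \<in> R" "c \<noteq> d" for c d
  proof -
    have "?r c \<noteq> ?r d"
      using that rotate_cell_rotate_cell unfolding R_def by metis
    then have "S (?r c) \<inter> S (?r d) = {}"
      using disjoint r that by blast
    then show ?thesis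
      using that T inj_on_image_Int[OF inj sub[OF r] sub[OF r]] by (metis image_empty)
  qed
  moreover have "(\<Union>c\<in>R. ?T c) = {1..N}"
  proof -
    have "(\<Union>c\<in>R. ?T c) = ?f ` (\<Union>c\<in>?r ` R. S c)"
      using T by auto
    also have "?r ` R = R"
      using bij_betw_rotate_cell by (simp add: bij_betw_def R_def)
    finally show ?thesis
      using union bij_betw_reverse_label by (simp add: bij_betw_def)
  qed
  moreover have "\<forall>x\<in>?T (i,j). \<forall>y\<in>?T (i,j+1). x < y"
    if "(i,j) \<in> R" "(i,j+1) \<in> R" for i j
  proof -
    note cells = rotate_cell_row_neighbours[of i j m n, folded R_def, OF that]
    have "\<forall>x\<in>S (m+1-i, n-j). \<forall>y\<in>S (m+1-i, n-j+1). x < y"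
      using rows cells(3,4) by fastforce
    from reverse_label_image_less[OF this sub[OF cells(4)]] show ?thesis
      using that T cells(1,2) by simp
  qed
  moreover have "\<forall>x\<in>?T (i,j). \<forall>y\<in>?T (i+1,j). x < y"
    if "(i,j) \<in> R" "(i+1,j) \<in> R" for i j
  proof -
    note cells = rotate_cell_column_neighbours[of i j m n, folded R_def, OF that]
    have "\<forall>x\<in>S (m-i, n+1-j). \<forall>y\<in>S (m-i+1, n+1-j). x < y"
      using columns cells(3,4) by fastforce
    from reverse_label_image_less[OF this sub[OF cells(4)]] show ?thesis
      using that T cells(1,2) by simp
  qed
  ultimately show ?thesis
    unfolding SVT_rect_def density_total_rotate_density N_def[symmetric] R_def[symmetric]
    by (auto simp: rotate_tableau_def R_def)
qed

lemma rotate_tableau_rotate_tableau: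
  assumes S: "S \<in> SVT_rect m n rho"
  shows "rotate_tableau m n (density_total m n rho) (rotate_tableau m n (density_total m n rho) S) = S"
proof
  fix c
  show "rotate_tableau m n (density_total m n rho)
          (rotate_tableau m n (density_total m n rho) S) c = S c"
  proof (cases "c \<in> rect_cells m n")
    case True
    then have "reverse_label (density_total m n rho) ` reverse_label (density_total m n rho) ` S c = S c"
      using SVT_rect_subset[OF S True]
      by (force simp: image_image reverse_label_reverse_label)
    then show ?thesis
      using True rotate_cell_in_rect_cells[OF True] rotate_cell_rotate_cell[OF True]
      by (simp add: rotate_tableau_def)
  next
    case False
    moreover have "S c = {}"
      using S False by (cases c) (simp add: SVT_rect_def)
    ultimately show ?thesis
      by (simp add: rotate_tableau_def)
  qed
qed

theorem proposition1:
  fixes m n :: nat and rho :: "nat \<Rightarrow> nat \<Rightarrow> nat"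
  assumes "m \<ge> 1" and "n \<ge> 1"
  shows "card (SVT_rect m n rho) = card (SVT_rect m n (rotate_density m n rho))"
proof -
  let ?\<phi> = "rotate_tableau m n (density_total m n rho)"
  note rotated_total = density_total_rotate_density[of m n rho]
  have "bij_betw ?\<phi> (SVT_rect m n rho) (SVT_rect m n (rotate_density m n rho))"
  proof (rule bij_betw_byWitness[where f' = ?\<phi>])
    show "\<forall>S\<in>SVT_rect m n rho. ?\<phi> (?\<phi> S) = S"
      using rotate_tableau_rotate_tableau by blast
    show "\<forall>S\<in>SVT_rect m n (rotate_density m n rho). ?\<phi> (?\<phi> S) = S"
      using rotate_tableau_rotate_tableau[of _ m n "rotate_density m n rho"]
      by (simp add: rotated_total)
    show "?\<phi> ` SVT_rect m n rho \<subseteq> SVT_rect m n (rotate_density m n rho)"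
      using rotate_tableau_in_SVT_rect by blast
    show "?\<phi> ` SVT_rect m n (rotate_density m n rho) \<subseteq> SVT_rect m n rho"
      using rotate_tableau_in_SVT_rect[of _ m n "rotate_density m n rho"]
      by (auto simp: rotated_total SVT_rect_rotate_density_rotate_density)
  qed
  then show ?thesis
    by (rule bij_betw_same_card)
qed

end
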